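(* Let $\mathrm{R}$ be an algebraic curvature tensor on an $n$-dimensional inner product space $(V,g)$, $n\geq 3$, such that (a) $\mathrm{R}\in\mathrm{C}_{\mathrm{PIC1}}$ if $n\geq 4$; (b) all sectional curvatures of $\mathrm{R}$ are non-negative if $n=3$. Then $\mathrm{Ric}(\mathrm{R})\leq \tfrac12\,\mathrm{scal}(\mathrm{R})\,g$.
   Context: The cone $\mathrm{C}_{\mathrm{PIC1}}$: $\mathrm{R}$ lies in it if its complex sectional curvature $\mathrm{R}(u,v,\bar u,\bar v)$ is non-negative on every two-complex-dimensional subspace $\Sigma$ of $V\otimes\mathbb{C}$ (for unitary bases $\{u,v\}$) containing a non-zero vector $w$ with $\bar w\perp\Sigma$; for $n\geq 4$ equivalently $\mathrm{R}_{1331}+\lambda^2\mathrm{R}_{1441}+\mathrm{R}_{2332}+\lambda^2\mathrm{R}_{2442}+2\lambda\mathrm{R}_{1234}\geq 0$ for all orthonormal 4-frames and $\lambda\in[0,1]$. $\mathrm{Ric}(\mathrm{R})$ and $\mathrm{scal}(\mathrm{R})$ are the Ricci and scalar contractions of $\mathrm{R}$. *)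

theory Defs
  imports "HOL-Analysis.Analysis"
begin

definition algebraic_curvature_tensor ::
  "('a::euclidean_space \<Rightarrow> 'a \<Rightarrow> 'a \<Rightarrow> 'a \<Rightarrow> real) \<Rightarrow> bool" where
  "algebraic_curvature_tensor R \<longleftrightarrow>
     (\<forall>y z w. linear (\<lambda>x. R x y z w)) \<and>
     (\<forall>x z w. linear (\<lambda>y. R x y z w)) \<and>
     (\<forall>x y w. linear (\<lambda>z. R x y z w)) \<and>
     (\<forall>x y z. linear (\<lambda>w. R x y z w)) \<and>
     (\<forall>x y z w. R x y z w = - R y x z w) \<and>
     (\<forall>x y z w. R x y z w = - R x y w z) \<and>
     (\<forall>x y z w. R x y z w = R z w x y) \<and>
     (\<forall>x y z w. R x y z w + R y z x w + R z x y w = 0)"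

text \<open>Non-negative sectional curvature (convention: the sectional curvature of the
  plane spanned by x,y has the sign of R(x,y,y,x)).\<close>
definition nonneg_sectional :: "('a::euclidean_space \<Rightarrow> 'a \<Rightarrow> 'a \<Rightarrow> 'a \<Rightarrow> real) \<Rightarrow> bool" where
  "nonneg_sectional R \<longleftrightarrow> (\<forall>x y. R x y y x \<ge> 0)"

definition orthonormal4 :: "'a::euclidean_space \<Rightarrow> 'a \<Rightarrow> 'a \<Rightarrow> 'a \<Rightarrow> bool" where
  "orthonormal4 e1 e2 e3 e4 \<longleftrightarrow>
     (\<forall>i\<in>{0..<4::nat}. \<forall>j\<in>{0..<4::nat}.
        [e1,e2,e3,e4] ! i \<bullet> [e1,e2,e3,e4] ! j = (if i = j then 1 else 0))"

text \<open>The cone PIC1, via its characterization (valid for n \<ge> 4) by orthonormal 4-frames.\<close>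
definition in_PIC1 :: "('a::euclidean_space \<Rightarrow> 'a \<Rightarrow> 'a \<Rightarrow> 'a \<Rightarrow> real) \<Rightarrow> bool" where
  "in_PIC1 R \<longleftrightarrow>
     (\<forall>e1 e2 e3 e4 (t::real). orthonormal4 e1 e2 e3 e4 \<longrightarrow> 0 \<le> t \<longrightarrow> t \<le> 1 \<longrightarrow>
        R e1 e3 e3 e1 + t\<^sup>2 * R e1 e4 e4 e1 + R e2 e3 e3 e2 + t\<^sup>2 * R e2 e4 e4 e2
          + 2 * t * R e1 e2 e3 e4 \<ge> 0)"

definition Ric :: "('a::euclidean_space \<Rightarrow> 'a \<Rightarrow> 'a \<Rightarrow> 'a \<Rightarrow> real) \<Rightarrow> 'a \<Rightarrow> 'a \<Rightarrow> real" where
  "Ric R x y = (\<Sum>b\<in>Basis. R x b b y)"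

definition scal :: "('a::euclidean_space \<Rightarrow> 'a \<Rightarrow> 'a \<Rightarrow> 'a \<Rightarrow> real) \<Rightarrow> real" where
  "scal R = (\<Sum>b\<in>Basis. Ric R b b)"

end

theory Submission imports Defs begin

text \<open>Complete a unit vector e to an orthonormal basis e, e_2, ..., e_n. Then scal R - 2 Ric(e, e)
  is the sum of R(e_i, e_j, e_j, e_i) over i, j \<ge> 2, the scalar curvature of the restriction of R
  to the orthogonal complement of e; so it suffices that each partial Ricci sum
  \<Sum>_(j \<ge> 2) R(e_j, e_i, e_i, e_j) is non-negative. For n = 3 its terms are sectional curvatures.
  For n \<ge> 4, PIC1 at \<lambda> = 0 applied to the frame e_j, e_k, e_i, e says that any two of its
  n - 2 \<ge> 2 non-zero terms have non-negative sum, which forces the whole sum to be non-negative.\<close>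

definition orthonormal_basis :: "'a::euclidean_space set \<Rightarrow> bool" where
  "orthonormal_basis B \<longleftrightarrow> pairwise orthogonal B \<and> (\<forall>b\<in>B. norm b = 1) \<and> span B = UNIV"

lemma orthonormal_basis_Basis: "orthonormal_basis (Basis :: 'a::euclidean_space set)"
  unfolding orthonormal_basis_def
  by (auto simp: pairwise_def orthogonal_def inner_Basis)

lemma orthonormal_basis_independent:
  assumes "orthonormal_basis B" shows "independent B"
  using assms unfolding orthonormal_basis_def
  by (metis norm_zero pairwise_orthogonal_independent zero_neq_one)

lemma orthonormal_basis_finite: "orthonormal_basis B \<Longrightarrow> finite B"
  by (rule independent_imp_finite[OF orthonormal_basis_independent])

lemma orthonormal_basis_card:
  fixes B :: "'a::euclidean_space set"
  assumes "orthonormal_basis B" shows "card B = DIM('a)"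
  using assms orthonormal_basis_independent[OF assms]
  by (metis dim_UNIV dim_span_eq_card_independent orthonormal_basis_def)

lemma orthonormal_basis_inner:
  assumes "orthonormal_basis B" "b \<in> B" "c \<in> B"
  shows "b \<bullet> c = (if b = c then 1 else 0)"
  using assms unfolding orthonormal_basis_def
  by (auto simp: pairwise_def orthogonal_def norm_eq_1)

lemma orthonormal_basis_expansion:
  assumes "orthonormal_basis B" shows "(\<Sum>b\<in>B. (x \<bullet> b) *\<^sub>R b) = x"
  using assms orthonormal_basis_finite[OF assms] unfolding orthonormal_basis_def
  by (auto intro: orthonormal_basis_expand)

lemma orthonormal_basis_insert_unit:
  fixes e :: "'a::euclidean_space"
  assumes "norm e = 1"
  obtains B where "e \<notin> B" "orthonormal_basis (insert e B)"
proof -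
  obtain S where "e \<in> S" "pairwise orthogonal S" "\<And>x. x \<in> S \<Longrightarrow> norm x = 1" "span S = UNIV"
    using vector_in_orthonormal_basis[OF assms] by metis
  then have "orthonormal_basis (insert e (S - {e}))"
    by (simp add: orthonormal_basis_def insert_absorb)
  then show thesis using that by blast
qed

lemma orthonormal4_in_orthonormal_basis:
  assumes B: "orthonormal_basis B" and "distinct [b, c, d, e]"
    and "b \<in> B" "c \<in> B" "d \<in> B" "e \<in> B"
  shows "orthonormal4 b c d e"
  unfolding orthonormal4_def
proof (intro ballI)
  fix i j :: nat assume "i \<in> {0..<4}" "j \<in> {0..<4}"
  then have "i \<in> {0, 1, 2, 3}" "j \<in> {0, 1, 2, 3}" by auto
  then show "[b, c, d, e] ! i \<bullet> [b, c, d, e] ! j = (if i = j then 1 else 0)"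
    using assms(2-) by (auto simp: orthonormal_basis_inner[OF B])
qed

lemma bilinear_trace_orthonormal_basis:
  fixes f :: "'a::euclidean_space \<Rightarrow> 'a \<Rightarrow> real"
  assumes f: "bilinear f" and B: "orthonormal_basis B" and C: "orthonormal_basis C"
  shows "(\<Sum>b\<in>B. f b b) = (\<Sum>c\<in>C. f c c)"
proof -
  interpret l: linear "\<lambda>x. f x y" for y using f by (simp add: bilinear_def)
  interpret r: linear "\<lambda>y. f x y" for x using f by (simp add: bilinear_def)
  have "(\<Sum>b\<in>B. f b b) = (\<Sum>b\<in>B. f (\<Sum>c\<in>C. (b \<bullet> c) *\<^sub>R c) b)"
    using orthonormal_basis_expansion[OF C] by simp
  also have "\<dots> = (\<Sum>b\<in>B. \<Sum>c\<in>C. (c \<bullet> b) * f c b)"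
    by (simp add: l.sum l.scale inner_commute)
  also have "\<dots> = (\<Sum>c\<in>C. \<Sum>b\<in>B. (c \<bullet> b) * f c b)"
    by (rule sum.swap)
  also have "\<dots> = (\<Sum>c\<in>C. f c (\<Sum>b\<in>B. (c \<bullet> b) *\<^sub>R b))"
    by (simp add: r.sum r.scale)
  also have "\<dots> = (\<Sum>c\<in>C. f c c)"
    using orthonormal_basis_expansion[OF B] by simp
  finally show ?thesis .
qed

lemma sum_nonneg_if_pairwise_sums_nonneg:
  fixes K :: "'b \<Rightarrow> real"
  assumes "2 \<le> card A" and pair: "\<And>b c. b \<in> A \<Longrightarrow> c \<in> A \<Longrightarrow> b \<noteq> c \<Longrightarrow> 0 \<le> K b + K c"
  shows "0 \<le> sum K A"
proof (cases "\<forall>b\<in>A. 0 \<le> K b")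
  case True then show ?thesis by (simp add: sum_nonneg)
next
  case False
  then obtain b where b: "b \<in> A" "K b < 0" by force
  have fin: "finite A" using assms(1) card.infinite by fastforce
  have "card (A - {b}) \<noteq> 0" using assms(1) b(1) fin by simp
  then obtain c where c: "c \<in> A" "c \<noteq> b" by (metis DiffE card.empty ex_in_conv singletonI)
  have others: "0 \<le> K a" if "a \<in> A - {b}" for a
    using pair[of b a] b that by auto
  have "K c \<le> sum K (A - {b})"
    by (rule member_le_sum) (use c others fin in auto)
  moreover have "sum K A = K b + sum K (A - {b})" using fin b by (simp add: sum.remove)
  moreover have "0 \<le> K b + K c" using pair b(1) c by blast
  ultimately show ?thesis by linarith
qed

lemma algebraic_curvature_tensorD:
  assumes "algebraic_curvature_tensor R"
  shows "linear (\<lambda>x. R x y z w)" "linear (\<lambda>y. R x y z w)"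
    and "linear (\<lambda>z. R x y z w)" "linear (\<lambda>w. R x y z w)"
    and "R x y z w = - R y x z w" "R x y z w = R z w x y"
  using assms unfolding algebraic_curvature_tensor_def by metis+

lemma algebraic_curvature_tensor_bilinear_inner:
  assumes "algebraic_curvature_tensor R" shows "bilinear (\<lambda>y z. R x y z w)"
  unfolding bilinear_def by (simp add: algebraic_curvature_tensorD(2,3)[OF assms])

lemma algebraic_curvature_tensor_diag_zero:
  assumes "algebraic_curvature_tensor R" shows "R x x z w = 0"
  using algebraic_curvature_tensorD(5)[OF assms, of x x z w] by linarith

lemma algebraic_curvature_tensor_sectional_sym:
  assumes "algebraic_curvature_tensor R" shows "R x y y x = R y x x y"
  by (rule algebraic_curvature_tensorD(6)[OF assms])

lemma Ric_bilinear:
  assumes "algebraic_curvature_tensor R" shows "bilinear (Ric R)"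
  unfolding bilinear_def Ric_def
  by (auto intro!: linear_compose_sum algebraic_curvature_tensorD(1,4)[OF assms])

lemma Ric_orthonormal_basis:
  assumes R: "algebraic_curvature_tensor R" and B: "orthonormal_basis B"
  shows "Ric R x w = (\<Sum>c\<in>B. R x c c w)"
  unfolding Ric_def
  by (rule bilinear_trace_orthonormal_basis[OF algebraic_curvature_tensor_bilinear_inner[OF R]
        orthonormal_basis_Basis B])

lemma scal_orthonormal_basis:
  assumes R: "algebraic_curvature_tensor R" and B: "orthonormal_basis B"
  shows "scal R = (\<Sum>b\<in>B. \<Sum>c\<in>B. R b c c b)"
  unfolding scal_def
  using bilinear_trace_orthonormal_basis[OF Ric_bilinear[OF R] orthonormal_basis_Basis B]
  by (simp add: Ric_orthonormal_basis[OF R B])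

lemma scal_split_unit_vector:
  assumes R: "algebraic_curvature_tensor R" and B: "orthonormal_basis (insert e B)" and "e \<notin> B"
  shows "scal R = 2 * Ric R e e + (\<Sum>b\<in>B. \<Sum>c\<in>B. R b c c b)"
proof -
  have fin: "finite B" using orthonormal_basis_finite[OF B] by simp
  have ric: "Ric R e e = (\<Sum>c\<in>B. R e c c e)"
    using Ric_orthonormal_basis[OF R B, of e e] fin \<open>e \<notin> B\<close>
    by (simp add: algebraic_curvature_tensor_diag_zero[OF R])
  have "scal R = (\<Sum>c\<in>B. R e c c e) + (\<Sum>b\<in>B. R b e e b + (\<Sum>c\<in>B. R b c c b))"
    using scal_orthonormal_basis[OF R B] fin \<open>e \<notin> B\<close>
    by (simp add: algebraic_curvature_tensor_diag_zero[OF R])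
  also have "\<dots> = 2 * (\<Sum>c\<in>B. R e c c e) + (\<Sum>b\<in>B. \<Sum>c\<in>B. R b c c b)"
    by (simp add: sum.distrib algebraic_curvature_tensor_sectional_sym[OF R, of _ e])
  finally show ?thesis using ric by simp
qed

lemma Ric_le_half_scal_unit_vector:
  assumes R: "algebraic_curvature_tensor R" and B: "orthonormal_basis (insert e B)" and "e \<notin> B"
    and partial_Ric: "\<And>d. d \<in> B \<Longrightarrow> 0 \<le> (\<Sum>c\<in>B. R c d d c)"
  shows "Ric R e e \<le> scal R / 2"
proof -
  have "0 \<le> (\<Sum>d\<in>B. \<Sum>c\<in>B. R c d d c)" by (simp add: partial_Ric sum_nonneg)
  also have "\<dots> = (\<Sum>b\<in>B. \<Sum>c\<in>B. R b c c b)" by (rule sum.swap)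
  finally show ?thesis using scal_split_unit_vector[OF assms(1-3)] by linarith
qed

lemma in_PIC1_imp_sectional_pair_nonneg:
  assumes "in_PIC1 R" and "orthonormal4 b c d e"
  shows "0 \<le> R b d d b + R c d d c"
  using assms(1)[unfolded in_PIC1_def, rule_format, OF assms(2), of 0] by simp

lemma in_PIC1_partial_Ric_nonneg:
  assumes R: "algebraic_curvature_tensor R" and P: "in_PIC1 R"
    and B: "orthonormal_basis (insert e B)" "e \<notin> B" and "d \<in> B" and "4 \<le> card (insert e B)"
  shows "0 \<le> (\<Sum>c\<in>B. R c d d c)"
proof -
  have fin: "finite B" using orthonormal_basis_finite[OF B(1)] by simp
  have "(\<Sum>c\<in>B. R c d d c) = (\<Sum>c\<in>B - {d}. R c d d c)"
    using fin \<open>d \<in> B\<close> by (simp add: sum.remove algebraic_curvature_tensor_diag_zero[OF R])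
  also have "0 \<le> \<dots>"
  proof (rule sum_nonneg_if_pairwise_sums_nonneg)
    show "2 \<le> card (B - {d})" using assms(5,6) fin B(2) by simp
    fix b c assume "b \<in> B - {d}" "c \<in> B - {d}" "b \<noteq> c"
    then have "orthonormal4 b c d e"
      using \<open>d \<in> B\<close> B(2) by (intro orthonormal4_in_orthonormal_basis[OF B(1)]) auto
    then show "0 \<le> R b d d b + R c d d c" by (rule in_PIC1_imp_sectional_pair_nonneg[OF P])
  qed
  finally show ?thesis .
qed

lemma Ric_scaleR_diag:
  assumes "algebraic_curvature_tensor R" shows "Ric R (a *\<^sub>R x) (a *\<^sub>R x) = a\<^sup>2 * Ric R x x"
  using bilinear_lmul[OF Ric_bilinear[OF assms]] bilinear_rmul[OF Ric_bilinear[OF assms]]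
  by (simp add: power2_eq_square)

theorem lemma3p3:
  fixes R :: "'a::euclidean_space \<Rightarrow> 'a \<Rightarrow> 'a \<Rightarrow> 'a \<Rightarrow> real"
  assumes "algebraic_curvature_tensor R"
    and "DIM('a) \<ge> 3"
    and "DIM('a) \<ge> 4 \<Longrightarrow> in_PIC1 R"
    and "DIM('a) = 3 \<Longrightarrow> nonneg_sectional R"
  shows "\<forall>x::'a. Ric R x x \<le> scal R / 2 * (x \<bullet> x)"
proof
  fix x :: 'a
  show "Ric R x x \<le> scal R / 2 * (x \<bullet> x)"
  proof (cases "x = 0")
    case True
    then show ?thesis using bilinear_lzero[OF Ric_bilinear[OF assms(1)]] by simp
  next
    case False
    define e where "e = x /\<^sub>R norm x"
    have "norm e = 1" using False by (simp add: e_def)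
    then obtain B where B: "e \<notin> B" "orthonormal_basis (insert e B)"
      by (rule orthonormal_basis_insert_unit)
    have "0 \<le> (\<Sum>c\<in>B. R c d d c)" if "d \<in> B" for d
    proof (cases "DIM('a) = 3")
      case True
      then show ?thesis using assms(4) by (simp add: nonneg_sectional_def sum_nonneg)
    next
      case False
      then show ?thesis
        using in_PIC1_partial_Ric_nonneg[OF assms(1) _ B(2,1) that] assms(2,3)
          orthonormal_basis_card[OF B(2)] by simp
    qed
    then have "Ric R e e \<le> scal R / 2"
      using Ric_le_half_scal_unit_vector[OF assms(1) B(2,1)] by blast
    moreover have "x = norm x *\<^sub>R e" using False by (simp add: e_def)
    ultimately show ?thesis
      using Ric_scaleR_diag[OF assms(1), of "norm x" e]
      by (metis mult.commute mult_left_mono power2_norm_eq_inner zero_le_power2)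
  qed
qed

end
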